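(* For every subdistribution $\mu$ on $\Sigma$, state assertions $A_1,\ldots,A_n$ and $p_1,\ldots,p_n\in[0,1]$: $\mu\not\vDash\bigoplus_{i=1}^n(\mathbb{P}[A_i]=p_i)$ iff there exists an outcome assertion $\psi$ containing no implications such that $\mu\vDash\psi$ and $\psi\Rightarrow\lnot\bigoplus_{i=1}^n(\mathbb{P}[A_i]=p_i)$.
   Context: Subdistributions $\mu\colon\Sigma\to[0,1]$ on a countable set of states, mass $|\mu|=\sum_\sigma\mu(\sigma)\le1$, support $\mathsf{supp}(\mu)$, zero $\varnothing$, and partial pointwise sum $+$ (defined when the result has mass $\le1$). State assertions have a relation $\sigma\vDash A$ and are closed under $\land$ and negation. Atomic outcome assertions $\mathbb{P}[A]=p$: $\mu\vDash\mathbb{P}[A]=p$ iff $|\mu|=p$ and every state in $\mathsf{supp}(\mu)$ satisfies $A$. Outcome assertions are built from atomic ones with $\top,\bot,\top^\oplus$ (only $\varnothing$), classical $\land$ and $\Rightarrow$, and $\oplus$ ($\mu\vDash\varphi\oplus\psi$ iff $\mu=\mu_1+\mu_2$ with $\mu_1\vDash\varphi$, $\mu_2\vDash\psi$); $\lnot\varphi=\varphi\Rightarrow\bot$; "no implications" means $\Rightarrow$ does not occur. $\psi\Rightarrow\chi$ as a proposition means every subdistribution satisfying $\psi$ satisfies $\chi$. *)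

theory Defs
  imports "HOL-Analysis.Analysis" "HOL-Library.Countable"
begin

definition mass :: "('s \<Rightarrow> real) \<Rightarrow> real" where
  "mass \<mu> = infsum \<mu> UNIV"

definition supp :: "('s \<Rightarrow> real) \<Rightarrow> 's set" where
  "supp \<mu> = {s. \<mu> s \<noteq> 0}"

definition is_subdist :: "('s::countable \<Rightarrow> real) \<Rightarrow> bool" where
  "is_subdist \<mu> \<longleftrightarrow> (\<forall>s. 0 \<le> \<mu> s) \<and> \<mu> summable_on UNIV \<and> mass \<mu> \<le> 1"

datatype 'sa oassn =
    OAtom 'sa real          (* P[A] = p *)
  | OTop
  | OBot
  | OTopPlus
  | OAnd "'sa oassn" "'sa oassn"
  | OImp "'sa oassn" "'sa oassn"
  | OPlus "'sa oassn" "'sa oassn"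

definition ONot :: "'sa oassn \<Rightarrow> 'sa oassn" where
  "ONot \<phi> = OImp \<phi> OBot"

fun no_imp :: "'sa oassn \<Rightarrow> bool" where
  "no_imp (OImp _ _) = False"
| "no_imp (OAnd a b) = (no_imp a \<and> no_imp b)"
| "no_imp (OPlus a b) = (no_imp a \<and> no_imp b)"
| "no_imp _ = True"

fun osat :: "('s::countable \<Rightarrow> 'sa \<Rightarrow> bool) \<Rightarrow> ('s \<Rightarrow> real) \<Rightarrow> 'sa oassn \<Rightarrow> bool" where
  "osat sat \<mu> (OAtom A p) = (mass \<mu> = p \<and> (\<forall>s\<in>supp \<mu>. sat s A))"
| "osat sat \<mu> OTop = True"
| "osat sat \<mu> OBot = False"
| "osat sat \<mu> OTopPlus = (\<mu> = (\<lambda>_. 0))"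
| "osat sat \<mu> (OAnd a b) = (osat sat \<mu> a \<and> osat sat \<mu> b)"
| "osat sat \<mu> (OImp a b) = (osat sat \<mu> a \<longrightarrow> osat sat \<mu> b)"
| "osat sat \<mu> (OPlus a b) = (\<exists>\<mu>1 \<mu>2. is_subdist \<mu>1 \<and> is_subdist \<mu>2 \<and>
      \<mu> = (\<lambda>s. \<mu>1 s + \<mu>2 s) \<and> osat sat \<mu>1 a \<and> osat sat \<mu>2 b)"

definition oentails :: "('s::countable \<Rightarrow> 'sa \<Rightarrow> bool) \<Rightarrow> 'sa oassn \<Rightarrow> 'sa oassn \<Rightarrow> bool" where
  "oentails sat \<psi> \<phi> \<longleftrightarrow> (\<forall>\<mu>. is_subdist \<mu> \<longrightarrow> osat sat \<mu> \<psi> \<longrightarrow> osat sat \<mu> \<phi>)"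

fun bigplus :: "('sa \<times> real) list \<Rightarrow> 'sa oassn" where
  "bigplus [] = OTopPlus"
| "bigplus [(A, p)] = OAtom A p"
| "bigplus ((A, p) # x # xs) = OPlus (OAtom A p) (bigplus (x # xs))"

end

theory Submission
  imports Defs
begin

text \<open>
  Let \<open>q s\<close> be the vector of truth values of \<open>A\<^sub>1, \<dots>, A\<^sub>n\<close> at \<open>s\<close>; its fibres are the
  cells of the partition generated by the \<open>A\<^sub>i\<close>. Whether a subdistribution satisfies
  \<open>\<Oplus>\<^sub>i P[A\<^sub>i] = p\<^sub>i\<close> depends only on its masses on these cells: if \<open>\<nu> = \<Sum>\<^sub>i f\<^sub>i\<close> is a
  decomposition witnessing the sum and \<open>\<mu>\<close> has the same cell masses as \<open>\<nu>\<close>, then rescaling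
  \<open>\<mu>\<close> on every cell to the mass that \<open>f\<^sub>i\<close> has there yields a decomposition of \<open>\<mu>\<close>,
  because each \<open>A\<^sub>i\<close> is constant on cells.

  The implication-free assertion \<open>\<Oplus>\<^sub>b P[C\<^sub>b] = \<mu>(cell b)\<close>, where \<open>C\<^sub>b\<close> is the
  conjunction of literals cutting out cell \<open>b\<close>, is satisfied exactly by the subdistributions
  with the cell masses of \<open>\<mu>\<close>. So if \<open>\<mu>\<close> violates the sum, every model of it does.
\<close>

lemma is_subdist_dominated:
  assumes "is_subdist \<nu>" "\<And>s. 0 \<le> f s" "\<And>s. f s \<le> \<nu> s"
  shows "is_subdist f"
proof -
  have \<nu>_summable: "\<nu> summable_on UNIV" using assms(1) by (simp add: is_subdist_def)
  then have f_summable: "f summable_on UNIV"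
    using summable_on_comparison_test assms(2,3) by blast
  have "mass f \<le> mass \<nu>"
    unfolding mass_def using f_summable \<nu>_summable assms(3) by (intro infsum_mono)
  then show ?thesis using assms f_summable by (auto simp: is_subdist_def)
qed

lemma is_subdist_zero: "is_subdist (\<lambda>_. 0)"
  by (simp add: is_subdist_def mass_def)

lemma osat_bigplus_Cons:
  assumes "is_subdist \<nu>"
  shows "osat sat \<nu> (bigplus ((A, p) # As)) \<longleftrightarrow>
    (\<exists>\<nu>1 \<nu>2. is_subdist \<nu>1 \<and> is_subdist \<nu>2 \<and> \<nu> = (\<lambda>s. \<nu>1 s + \<nu>2 s) \<and>
       osat sat \<nu>1 (OAtom A p) \<and> osat sat \<nu>2 (bigplus As))"
proof (cases As)
  case Nil
  show ?thesis
  proof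
    assume "osat sat \<nu> (bigplus ((A, p) # As))"
    then show "\<exists>\<nu>1 \<nu>2. is_subdist \<nu>1 \<and> is_subdist \<nu>2 \<and> \<nu> = (\<lambda>s. \<nu>1 s + \<nu>2 s) \<and>
       osat sat \<nu>1 (OAtom A p) \<and> osat sat \<nu>2 (bigplus As)"
      using assms is_subdist_zero Nil by (intro exI[of _ \<nu>] exI[of _ "\<lambda>_. 0"]) simp
  qed (use Nil in auto)
next
  case (Cons B Bs)
  then show ?thesis by simp
qed

definition decomposes :: "('s::countable \<Rightarrow> 'sa \<Rightarrow> bool) \<Rightarrow> ('sa \<times> real) list \<Rightarrow> ('s \<Rightarrow> real) \<Rightarrow> bool" where
  "decomposes sat As \<nu> \<longleftrightarrow>
    (\<exists>fs. list_all2 (\<lambda>f (A, p). is_subdist f \<and> osat sat f (OAtom A p)) fs As \<and>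
          \<nu> = (\<lambda>s. \<Sum>f\<leftarrow>fs. f s))"

lemma decomposes_Nil: "decomposes sat [] \<nu> \<longleftrightarrow> \<nu> = (\<lambda>_. 0)"
  by (simp add: decomposes_def)

lemma decomposes_Cons:
  "decomposes sat ((A, p) # As) \<nu> \<longleftrightarrow>
    (\<exists>f \<nu>'. is_subdist f \<and> osat sat f (OAtom A p) \<and> decomposes sat As \<nu>' \<and>
       \<nu> = (\<lambda>s. f s + \<nu>' s))"
  unfolding decomposes_def list_all2_Cons2 by fastforce

lemma decomposes_nonneg: "decomposes sat As \<nu> \<Longrightarrow> 0 \<le> \<nu> s"
proof (induction As arbitrary: \<nu>)
  case Nil
  then show ?case by (simp add: decomposes_Nil)
next
  case (Cons Ap As)
  then show ?case by (cases Ap) (fastforce simp: decomposes_Cons is_subdist_def)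
qed

lemma osat_bigplus_iff_decomposes:
  "is_subdist \<nu> \<Longrightarrow> osat sat \<nu> (bigplus As) \<longleftrightarrow> decomposes sat As \<nu>"
proof (induction As arbitrary: \<nu>)
  case Nil
  then show ?case by (simp add: decomposes_Nil)
next
  case (Cons Ap As)
  obtain A p where Ap: "Ap = (A, p)" by fastforce
  show ?case
    unfolding Ap osat_bigplus_Cons[OF Cons.prems] decomposes_Cons
  proof (intro iffI; elim exE conjE)
    fix f \<nu>' assume f: "is_subdist f" "osat sat f (OAtom A p)"
      and \<nu>': "is_subdist \<nu>'" "osat sat \<nu>' (bigplus As)" and \<nu>: "\<nu> = (\<lambda>s. f s + \<nu>' s)"
    then show "\<exists>f \<nu>'. is_subdist f \<and> osat sat f (OAtom A p) \<and> decomposes sat As \<nu>' \<and>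
       \<nu> = (\<lambda>s. f s + \<nu>' s)"
      using Cons.IH by blast
  next
    fix f \<nu>' assume f: "is_subdist f" "osat sat f (OAtom A p)"
      and \<nu>': "decomposes sat As \<nu>'" and \<nu>: "\<nu> = (\<lambda>s. f s + \<nu>' s)"
    have "is_subdist \<nu>'"
      by (rule is_subdist_dominated[OF Cons.prems])
        (use decomposes_nonneg[OF \<nu>'] f(1) in \<open>auto simp: \<nu> is_subdist_def\<close>)
    then show "\<exists>f \<nu>'. is_subdist f \<and> is_subdist \<nu>' \<and> \<nu> = (\<lambda>s. f s + \<nu>' s) \<and>
       osat sat f (OAtom A p) \<and> osat sat \<nu>' (bigplus As)"
      using Cons.IH \<nu>' f \<nu> by blast
  qed
qed

text \<open>On a cell of \<open>\<mu>\<close>-mass 0 the division by zero makes \<open>cellwise_rescale\<close> vanish.\<close>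

definition cellwise_rescale :: "('s \<Rightarrow> 'b) \<Rightarrow> ('s \<Rightarrow> real) \<Rightarrow> ('s \<Rightarrow> real) \<Rightarrow> 's \<Rightarrow> real" where
  "cellwise_rescale q \<mu> f s = \<mu> s * infsum f (q -` {q s}) / infsum \<mu> (q -` {q s})"

lemma cellwise_rescale_nonzero:
  assumes "cellwise_rescale q \<mu> f s \<noteq> 0"
  obtains t where "q t = q s" "f t \<noteq> 0"
proof -
  have "infsum f (q -` {q s}) \<noteq> 0" using assms by (auto simp: cellwise_rescale_def)
  then have "\<not> (\<forall>t\<in>q -` {q s}. f t = 0)" by (metis infsum_0)
  then show ?thesis using that by auto
qed

lemma summable_on_sum_list:
  fixes fs :: "('a \<Rightarrow> 'b::topological_comm_monoid_add) list"
  shows "(\<And>f. f \<in> set fs \<Longrightarrow> f summable_on A) \<Longrightarrow> (\<lambda>s. \<Sum>f\<leftarrow>fs. f s) summable_on A"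
  by (induction fs) (auto intro: summable_on_add)

lemma sum_list_cellwise_rescale:
  assumes "\<And>f. f \<in> set fs \<Longrightarrow> f summable_on UNIV"
  shows "(\<Sum>f\<leftarrow>fs. cellwise_rescale q \<mu> f s) = cellwise_rescale q \<mu> (\<lambda>t. \<Sum>f\<leftarrow>fs. f t) s"
  using assms
proof (induction fs)
  case Nil
  then show ?case by (simp add: cellwise_rescale_def)
next
  case (Cons f fs)
  let ?C = "q -` {q s}"
  have "f summable_on ?C"
    using Cons.prems summable_on_subset_banach by (metis list.set_intros(1) subset_UNIV)
  moreover have "(\<lambda>t. \<Sum>g\<leftarrow>fs. g t) summable_on ?C"
    using Cons.prems summable_on_subset_banach summable_on_sum_list
    by (metis list.set_intros(2) subset_UNIV)
  ultimately have "infsum (\<lambda>t. f t + (\<Sum>g\<leftarrow>fs. g t)) ?C =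
      infsum f ?C + infsum (\<lambda>t. \<Sum>g\<leftarrow>fs. g t) ?C"
    by (rule infsum_add)
  then show ?case
    using Cons by (simp add: cellwise_rescale_def distrib_left add_divide_distrib)
qed

context
  fixes \<mu> :: "'s \<Rightarrow> real"
  assumes \<mu>_nonneg: "\<And>s. 0 \<le> \<mu> s" and \<mu>_summable: "\<mu> summable_on UNIV"
begin

lemma cellwise_rescale_nonneg: "(\<And>s. 0 \<le> f s) \<Longrightarrow> 0 \<le> cellwise_rescale q \<mu> f s"
  unfolding cellwise_rescale_def by (intro divide_nonneg_nonneg mult_nonneg_nonneg infsum_nonneg \<mu>_nonneg)

lemma cellwise_rescale_le:
  assumes "infsum f (q -` {q s}) \<le> infsum \<mu> (q -` {q s})"
  shows "cellwise_rescale q \<mu> f s \<le> \<mu> s"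
proof (cases "infsum \<mu> (q -` {q s}) = 0")
  case True
  then show ?thesis by (simp add: cellwise_rescale_def \<mu>_nonneg)
next
  case False
  then have "infsum \<mu> (q -` {q s}) > 0" using infsum_nonneg[of _ \<mu>] \<mu>_nonneg
    by (metis less_eq_real_def)
  then have "infsum f (q -` {q s}) / infsum \<mu> (q -` {q s}) \<le> 1" using assms by simp
  then have "\<mu> s * (infsum f (q -` {q s}) / infsum \<mu> (q -` {q s})) \<le> \<mu> s * 1"
    by (rule mult_left_mono) (rule \<mu>_nonneg)
  then show ?thesis by (simp add: cellwise_rescale_def)
qed

lemma infsum_cellwise_rescale_cell:
  assumes "\<And>s. 0 \<le> f s" "infsum f (q -` {b}) \<le> infsum \<mu> (q -` {b})"
  shows "infsum (cellwise_rescale q \<mu> f) (q -` {b}) = infsum f (q -` {b})"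
proof (cases "infsum \<mu> (q -` {b}) = 0")
  case True
  moreover have "0 \<le> infsum f (q -` {b})" using assms(1) by (simp add: infsum_nonneg)
  moreover have "infsum (cellwise_rescale q \<mu> f) (q -` {b}) = 0"
    using True by (intro infsum_0) (simp add: cellwise_rescale_def)
  ultimately show ?thesis using assms(2) by simp
next
  case False
  have "infsum (cellwise_rescale q \<mu> f) (q -` {b}) =
      infsum (\<lambda>s. infsum f (q -` {b}) / infsum \<mu> (q -` {b}) * \<mu> s) (q -` {b})"
    by (rule infsum_cong) (simp add: cellwise_rescale_def)
  also have "\<dots> = infsum f (q -` {b}) / infsum \<mu> (q -` {b}) * infsum \<mu> (q -` {b})"
    by (rule infsum_cmult_right')
  also have "\<dots> = infsum f (q -` {b})"
    using False by simp
  finally show ?thesis .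
qed

lemma cellwise_rescale_same_cell_masses:
  assumes "\<And>b. infsum \<nu> (q -` {b}) = infsum \<mu> (q -` {b})"
  shows "cellwise_rescale q \<mu> \<nu> s = \<mu> s"
proof (cases "infsum \<mu> (q -` {q s}) = 0")
  case True
  then have "\<mu> s = 0"
    using nonneg_infsum_le_0D[of \<mu> "q -` {q s}"] \<mu>_nonneg summable_on_subset_banach[OF \<mu>_summable]
    by auto
  then show ?thesis by (simp add: cellwise_rescale_def)
next
  case False
  then show ?thesis by (simp add: cellwise_rescale_def assms)
qed

lemma mass_cellwise_rescale:
  assumes "finite (range q)" "f summable_on UNIV" "\<And>s. 0 \<le> f s"
    and "\<And>b. infsum f (q -` {b}) \<le> infsum \<mu> (q -` {b})"
  shows "mass (cellwise_rescale q \<mu> f) = mass f"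
proof -
  have mass_by_cells: "mass g = (\<Sum>b\<in>range q. infsum g (q -` {b}))" if "g summable_on UNIV" for g
  proof -
    have "(\<Sum>b\<in>range q. infsum g (q -` {b})) = infsum g (\<Union>b\<in>range q. q -` {b})"
      using assms(1) summable_on_subset_banach[OF that] by (intro sum_infsum) auto
    also have "(\<Union>b\<in>range q. q -` {b}) = UNIV" by auto
    finally show ?thesis by (simp add: mass_def)
  qed
  have "cellwise_rescale q \<mu> f summable_on UNIV"
    using \<mu>_summable by (rule summable_on_comparison_test)
      (simp_all add: cellwise_rescale_le[OF assms(4)] cellwise_rescale_nonneg[OF assms(3)])
  then show ?thesis
    using assms by (simp add: mass_by_cells infsum_cellwise_rescale_cell)
qed

end

lemma osat_atom_cellwise_rescale:
  fixes q :: "'s::countable \<Rightarrow> 'b"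
  assumes \<mu>: "is_subdist \<mu>" and f: "is_subdist f" "osat sat f (OAtom A p)"
    and q_finite: "finite (range q)"
    and A_on_cells: "\<And>s t. q s = q t \<Longrightarrow> sat s A \<longleftrightarrow> sat t A"
    and cell_bound: "\<And>b. infsum f (q -` {b}) \<le> infsum \<mu> (q -` {b})"
  shows "is_subdist (cellwise_rescale q \<mu> f) \<and> osat sat (cellwise_rescale q \<mu> f) (OAtom A p)"
proof -
  have \<mu>_nonneg: "\<And>s. 0 \<le> \<mu> s" and \<mu>_summable: "\<mu> summable_on UNIV"
    and f_nonneg: "\<And>s. 0 \<le> f s" and f_summable: "f summable_on UNIV"
    using \<mu> f(1) by (auto simp: is_subdist_def)
  have "is_subdist (cellwise_rescale q \<mu> f)"
    by (rule is_subdist_dominated[OF \<mu>])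
      (simp_all add: cellwise_rescale_nonneg[OF \<mu>_nonneg \<mu>_summable f_nonneg]
        cellwise_rescale_le[OF \<mu>_nonneg \<mu>_summable cell_bound])
  moreover have "mass (cellwise_rescale q \<mu> f) = p"
    using mass_cellwise_rescale[OF \<mu>_nonneg \<mu>_summable q_finite f_summable f_nonneg cell_bound] f(2)
    by simp
  moreover have "sat s A" if s_supp: "s \<in> supp (cellwise_rescale q \<mu> f)" for s
  proof -
    obtain t where "q t = q s" "f t \<noteq> 0"
      using cellwise_rescale_nonzero[of q \<mu> f s] s_supp by (auto simp: supp_def)
    then have "sat t A" using f(2) by (simp add: supp_def)
    then show ?thesis using A_on_cells[OF \<open>q t = q s\<close>] by simp
  qed
  ultimately show ?thesis by simp
qed

lemma osat_bigplus_transfer: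
  fixes q :: "'s::countable \<Rightarrow> 'b"
  assumes q_finite: "finite (range q)"
    and As_on_cells: "\<And>A s t. A \<in> fst ` set As \<Longrightarrow> q s = q t \<Longrightarrow> sat s A \<longleftrightarrow> sat t A"
    and \<mu>: "is_subdist \<mu>" and \<nu>: "is_subdist \<nu>"
    and same_cell_masses: "\<And>b. infsum \<nu> (q -` {b}) = infsum \<mu> (q -` {b})"
    and \<nu>_sat: "osat sat \<nu> (bigplus As)"
  shows "osat sat \<mu> (bigplus As)"
proof -
  have \<mu>_nonneg: "\<And>s. 0 \<le> \<mu> s" and \<mu>_summable: "\<mu> summable_on UNIV"
    and \<nu>_summable: "\<nu> summable_on UNIV"
    using \<mu> \<nu> by (auto simp: is_subdist_def)
  obtain fs where fs: "list_all2 (\<lambda>f (A, p). is_subdist f \<and> osat sat f (OAtom A p)) fs As"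
    and \<nu>_sum: "\<nu> = (\<lambda>s. \<Sum>f\<leftarrow>fs. f s)"
    using osat_bigplus_iff_decomposes[OF \<nu>] \<nu>_sat unfolding decomposes_def by auto
  have fs_subdist: "\<forall>f\<in>set fs. is_subdist f"
    using fs by (induction fs As rule: list_all2_induct) auto
  have cell_bound: "infsum f (q -` {b}) \<le> infsum \<mu> (q -` {b})" if "f \<in> set fs" for f b
  proof -
    have f_summable: "f summable_on UNIV" using fs_subdist that by (simp add: is_subdist_def)
    have "f s \<le> \<nu> s" for s
    proof -
      have "f s \<le> (\<Sum>g\<leftarrow>fs. g s)"
        using that fs_subdist by (intro member_le_sum_list) (auto simp: is_subdist_def)
      then show ?thesis by (simp add: \<nu>_sum)
    qed
    then have "infsum f (q -` {b}) \<le> infsum \<nu> (q -` {b})"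
      using summable_on_subset_banach[OF f_summable subset_UNIV]
        summable_on_subset_banach[OF \<nu>_summable subset_UNIV]
      by (intro infsum_mono)
    then show ?thesis by (simp add: same_cell_masses)
  qed
  have "list_all2 (\<lambda>g (A, p). is_subdist g \<and> osat sat g (OAtom A p))
      (map (cellwise_rescale q \<mu>) fs) As"
    unfolding list_all2_map1
  proof (rule list.rel_mono_strong[OF fs], clarify)
    fix f A p
    assume f_in: "f \<in> set fs" and Ap_in: "(A, p) \<in> set As"
      and f: "is_subdist f" "osat sat f (OAtom A p)"
    have "A \<in> fst ` set As" using Ap_in by force
    then show "is_subdist (cellwise_rescale q \<mu> f) \<and> osat sat (cellwise_rescale q \<mu> f) (OAtom A p)"
      by (rule osat_atom_cellwise_rescale[OF \<mu> f q_finite As_on_cells cell_bound[OF f_in]])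
  qed
  moreover have "(\<Sum>g\<leftarrow>map (cellwise_rescale q \<mu>) fs. g s) = \<mu> s" for s
  proof -
    have "(\<Sum>g\<leftarrow>map (cellwise_rescale q \<mu>) fs. g s) = (\<Sum>f\<leftarrow>fs. cellwise_rescale q \<mu> f s)"
      by (simp add: o_def)
    also have "\<dots> = cellwise_rescale q \<mu> \<nu> s"
      unfolding \<nu>_sum using fs_subdist by (intro sum_list_cellwise_rescale) (simp add: is_subdist_def)
    also have "\<dots> = \<mu> s"
      by (rule cellwise_rescale_same_cell_masses[OF \<mu>_nonneg \<mu>_summable same_cell_masses])
    finally show ?thesis .
  qed
  ultimately have "decomposes sat As \<mu>"
    unfolding decomposes_def by (intro exI[of _ "map (cellwise_rescale q \<mu>) fs"]) simp
  then show ?thesis using osat_bigplus_iff_decomposes[OF \<mu>] by blast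
qed

definition pairwise_exclusive :: "('s \<Rightarrow> 'sa \<Rightarrow> bool) \<Rightarrow> ('sa \<times> real) list \<Rightarrow> bool" where
  "pairwise_exclusive sat Cs \<longleftrightarrow> sorted_wrt (\<lambda>(C, _) (D, _). \<forall>s. \<not> (sat s C \<and> sat s D)) Cs"

lemma pairwise_exclusive_Cons:
  "pairwise_exclusive sat ((C, p) # Cs) \<longleftrightarrow>
    (\<forall>(D, d)\<in>set Cs. \<forall>s. \<not> (sat s C \<and> sat s D)) \<and> pairwise_exclusive sat Cs"
  by (auto simp: pairwise_exclusive_def)

lemma osat_bigplus_exclusiveD:
  "pairwise_exclusive sat Cs \<Longrightarrow> is_subdist \<nu> \<Longrightarrow> osat sat \<nu> (bigplus Cs) \<Longrightarrow>
    (\<forall>s. \<nu> s \<noteq> 0 \<longrightarrow> (\<exists>(C, p)\<in>set Cs. sat s C)) \<and>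
    (\<forall>(C, p)\<in>set Cs. infsum \<nu> {s. sat s C} = p)"
proof (induction Cs arbitrary: \<nu>)
  case Nil
  then show ?case by simp
next
  case (Cons Cp Cs)
  obtain C p where Cp: "Cp = (C, p)" by fastforce
  have "osat sat \<nu> (bigplus ((C, p) # Cs))" using Cons.prems(3) Cp by simp
  then obtain \<nu>1 \<nu>2 where \<nu>: "\<nu> = (\<lambda>s. \<nu>1 s + \<nu>2 s)"
    and \<nu>1: "mass \<nu>1 = p" "\<forall>s\<in>supp \<nu>1. sat s C"
    and \<nu>2: "is_subdist \<nu>2" "osat sat \<nu>2 (bigplus Cs)"
    unfolding osat_bigplus_Cons[OF Cons.prems(2)] by auto
  have exclusive: "\<not> sat s D" if "sat s C" "(D, d) \<in> set Cs" for s D d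
    using Cons.prems(1) that by (auto simp: Cp pairwise_exclusive_Cons)
  have \<nu>1_off: "\<nu>1 s = 0" if "\<not> sat s C" for s
    using \<nu>1(2) that by (auto simp: supp_def)
  have \<nu>2_supp: "\<forall>s. \<nu>2 s \<noteq> 0 \<longrightarrow> (\<exists>(D, d)\<in>set Cs. sat s D)"
    and \<nu>2_masses: "\<forall>(D, d)\<in>set Cs. infsum \<nu>2 {s. sat s D} = d"
    using Cons.IH[OF _ \<nu>2] Cons.prems(1) by (auto simp: Cp pairwise_exclusive_Cons)
  have \<nu>2_off: "\<nu>2 s = 0" if "sat s C" for s
    using \<nu>2_supp exclusive[OF that] by fast
  have "infsum \<nu> {s. sat s C} = infsum \<nu>1 UNIV"
    by (rule infsum_cong_neutral) (auto simp: \<nu> \<nu>1_off \<nu>2_off)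
  then have "infsum \<nu> {s. sat s C} = p" using \<nu>1(1) by (simp add: mass_def)
  moreover have "infsum \<nu> {s. sat s D} = d" if "(D, d) \<in> set Cs" for D d
  proof -
    have "infsum \<nu> {s. sat s D} = infsum \<nu>2 {s. sat s D}"
      using exclusive[OF _ that] \<nu>1_off by (intro infsum_cong) (auto simp: \<nu>)
    then show ?thesis using \<nu>2_masses that by auto
  qed
  moreover have "\<nu> s \<noteq> 0 \<Longrightarrow> sat s C \<or> (\<exists>(D, d)\<in>set Cs. sat s D)" for s
    using \<nu>1_off \<nu>2_supp by (auto simp: \<nu>)
  ultimately show ?case by (auto simp: Cp)
qed

lemma osat_bigplus_exclusiveI:
  "pairwise_exclusive sat Cs \<Longrightarrow> is_subdist \<nu> \<Longrightarrow>
    \<forall>s. \<nu> s \<noteq> 0 \<longrightarrow> (\<exists>(C, p)\<in>set Cs. sat s C) \<Longrightarrow>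
    \<forall>(C, p)\<in>set Cs. infsum \<nu> {s. sat s C} = p \<Longrightarrow>
    osat sat \<nu> (bigplus Cs)"
proof (induction Cs arbitrary: \<nu>)
  case Nil
  then show ?case by auto
next
  case (Cons Cp Cs)
  obtain C p where Cp: "Cp = (C, p)" by fastforce
  have exclusive: "\<not> sat s D" if "sat s C" "(D, d) \<in> set Cs" for s D d
    using Cons.prems(1) that by (auto simp: Cp pairwise_exclusive_Cons)
  define \<nu>1 where "\<nu>1 s = (if sat s C then \<nu> s else 0)" for s
  define \<nu>2 where "\<nu>2 s = (if sat s C then 0 else \<nu> s)" for s
  have \<nu>_nonneg: "0 \<le> \<nu> s" for s using Cons.prems(2) by (simp add: is_subdist_def)
  have \<nu>1: "is_subdist \<nu>1"
    by (rule is_subdist_dominated[OF Cons.prems(2)]) (simp_all add: \<nu>1_def \<nu>_nonneg)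
  have \<nu>2: "is_subdist \<nu>2"
    by (rule is_subdist_dominated[OF Cons.prems(2)]) (simp_all add: \<nu>2_def \<nu>_nonneg)
  have "mass \<nu>1 = infsum \<nu> {s. sat s C}"
    unfolding mass_def by (rule infsum_cong_neutral) (auto simp: \<nu>1_def)
  then have "osat sat \<nu>1 (OAtom C p)"
    using Cons.prems(4) by (simp add: Cp supp_def \<nu>1_def)
  moreover have "osat sat \<nu>2 (bigplus Cs)"
  proof (rule Cons.IH[OF _ \<nu>2])
    show "pairwise_exclusive sat Cs"
      using Cons.prems(1) by (simp add: Cp pairwise_exclusive_Cons)
    show "\<forall>s. \<nu>2 s \<noteq> 0 \<longrightarrow> (\<exists>(D, d)\<in>set Cs. sat s D)"
      using Cons.prems(3) by (auto simp: \<nu>2_def Cp)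
    show "\<forall>(D, d)\<in>set Cs. infsum \<nu>2 {s. sat s D} = d"
    proof clarify
      fix D d assume D: "(D, d) \<in> set Cs"
      then have "infsum \<nu>2 {s. sat s D} = infsum \<nu> {s. sat s D}"
        using exclusive by (intro infsum_cong) (auto simp: \<nu>2_def)
      then show "infsum \<nu>2 {s. sat s D} = d" using Cons.prems(4) D by auto
    qed
  qed
  moreover have "\<nu> = (\<lambda>s. \<nu>1 s + \<nu>2 s)" by (auto simp: \<nu>1_def \<nu>2_def)
  ultimately show ?case
    unfolding Cp osat_bigplus_Cons[OF Cons.prems(2)] using \<nu>1 \<nu>2 by blast
qed

definition truth_vector :: "('s \<Rightarrow> 'sa \<Rightarrow> bool) \<Rightarrow> 'sa list \<Rightarrow> 's \<Rightarrow> bool list" where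
  "truth_vector sat As s = map (sat s) As"

lemma length_truth_vector [simp]: "length (truth_vector sat As s) = length As"
  by (simp add: truth_vector_def)

lemma finite_range_truth_vector: "finite (range (truth_vector sat As))"
proof (rule finite_subset)
  show "range (truth_vector sat As) \<subseteq> {bs. set bs \<subseteq> UNIV \<and> length bs = length As}"
    by auto
  show "finite {bs :: bool list. set bs \<subseteq> UNIV \<and> length bs = length As}"
    by (rule finite_lists_length_eq) simp
qed

lemma sat_eq_if_truth_vector_eq:
  "A \<in> set As \<Longrightarrow> truth_vector sat As s = truth_vector sat As t \<Longrightarrow> sat s A \<longleftrightarrow> sat t A"
  by (simp add: truth_vector_def)

fun literal_conj :: "('sa \<Rightarrow> 'sa \<Rightarrow> 'sa) \<Rightarrow> ('sa \<Rightarrow> 'sa) \<Rightarrow> 'sa list \<Rightarrow> bool list \<Rightarrow> 'sa" where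
  "literal_conj cj ng (A # As) (c # cs) = cj (if c then A else ng A) (literal_conj cj ng As cs)"
| "literal_conj cj ng _ _ = ng (cj undefined (ng undefined))"  \<comment> \<open>a tautology\<close>

lemma sat_literal_conj:
  fixes conj :: "'sa \<Rightarrow> 'sa \<Rightarrow> 'sa"
  assumes sat_conj: "\<And>s A B. sat s (conj A B) \<longleftrightarrow> sat s A \<and> sat s B"
    and sat_neg: "\<And>s A. sat s (neg A) \<longleftrightarrow> \<not> sat s A"
  shows "length cs = length As \<Longrightarrow> sat s (literal_conj conj neg As cs) \<longleftrightarrow> truth_vector sat As s = cs"
proof (induction As arbitrary: cs)
  case Nil
  then show ?case by (simp add: sat_conj sat_neg truth_vector_def)
next
  case (Cons A As)
  then show ?case by (cases cs) (auto simp: sat_conj sat_neg truth_vector_def)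
qed

definition cell_mass_assn ::
    "('sa \<Rightarrow> 'sa \<Rightarrow> 'sa) \<Rightarrow> ('sa \<Rightarrow> 'sa) \<Rightarrow> 'sa list \<Rightarrow> (bool list \<Rightarrow> real) \<Rightarrow> bool list list \<Rightarrow> 'sa oassn" where
  "cell_mass_assn cj ng As m bs = bigplus (map (\<lambda>b. (literal_conj cj ng As b, m b)) bs)"

lemma no_imp_bigplus: "no_imp (bigplus As)"
  by (induction As rule: bigplus.induct) auto

lemma osat_cell_mass_assn:
  fixes conj :: "'sa \<Rightarrow> 'sa \<Rightarrow> 'sa"
  assumes sat_conj: "\<And>s A B. sat s (conj A B) \<longleftrightarrow> sat s A \<and> sat s B"
    and sat_neg: "\<And>s A. sat s (neg A) \<longleftrightarrow> \<not> sat s A"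
    and \<nu>: "is_subdist \<nu>" and bs: "distinct bs" "set bs = range (truth_vector sat As)"
  shows "osat sat \<nu> (cell_mass_assn conj neg As m bs) \<longleftrightarrow>
    (\<forall>b\<in>set bs. infsum \<nu> (truth_vector sat As -` {b}) = m b)"
proof -
  let ?Cs = "map (\<lambda>b. (literal_conj conj neg As b, m b)) bs"
  have cell: "sat s (literal_conj conj neg As b) \<longleftrightarrow> truth_vector sat As s = b"
    if "b \<in> set bs" for b s
    using sat_literal_conj[where sat = sat and conj = conj and neg = neg, OF sat_conj sat_neg]
      bs(2) that by auto
  have "sorted_wrt (\<noteq>) bs" using bs(1) by (induction bs) auto
  then have excl: "pairwise_exclusive sat ?Cs"
    unfolding pairwise_exclusive_def sorted_wrt_map
    by (rule sorted_wrt_mono_rel[rotated]) (auto simp: cell)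
  have covered: "\<forall>s. \<nu> s \<noteq> 0 \<longrightarrow> (\<exists>(C, p)\<in>set ?Cs. sat s C)"
    using bs(2) by (force simp: cell)
  have "{s. sat s (literal_conj conj neg As b)} = truth_vector sat As -` {b}" if "b \<in> set bs" for b
    using cell[OF that] by auto
  then have masses: "(\<forall>(C, p)\<in>set ?Cs. infsum \<nu> {s. sat s C} = p) \<longleftrightarrow>
      (\<forall>b\<in>set bs. infsum \<nu> (truth_vector sat As -` {b}) = m b)"
    by simp
  show ?thesis
    unfolding cell_mass_assn_def
    using osat_bigplus_exclusiveD[OF excl \<nu>] osat_bigplus_exclusiveI[OF excl \<nu> covered]
    unfolding masses[symmetric] by fast
qed

lemma ex_no_imp_assn_same_cell_masses:
  fixes conj :: "'sa \<Rightarrow> 'sa \<Rightarrow> 'sa" and \<mu> :: "'s::countable \<Rightarrow> real"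
  assumes sat_conj: "\<And>s A B. sat s (conj A B) \<longleftrightarrow> sat s A \<and> sat s B"
    and sat_neg: "\<And>s A. sat s (neg A) \<longleftrightarrow> \<not> sat s A"
  obtains \<psi> where "no_imp \<psi>"
    and "\<And>\<nu>. is_subdist \<nu> \<Longrightarrow> osat sat \<nu> \<psi> \<longleftrightarrow>
      (\<forall>b. infsum \<nu> (truth_vector sat As -` {b}) = infsum \<mu> (truth_vector sat As -` {b}))"
proof -
  let ?q = "truth_vector sat As"
  obtain bs where bs: "distinct bs" "set bs = range ?q"
    using finite_distinct_list[OF finite_range_truth_vector] by metis
  define \<psi> where "\<psi> = cell_mass_assn conj neg As (\<lambda>b. infsum \<mu> (?q -` {b})) bs"
  have "osat sat \<nu> \<psi> \<longleftrightarrow> (\<forall>b. infsum \<nu> (?q -` {b}) = infsum \<mu> (?q -` {b}))"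
    if \<nu>: "is_subdist \<nu>" for \<nu>
  proof -
    have "osat sat \<nu> \<psi> \<longleftrightarrow> (\<forall>b\<in>set bs. infsum \<nu> (?q -` {b}) = infsum \<mu> (?q -` {b}))"
      unfolding \<psi>_def
      by (rule osat_cell_mass_assn[where sat = sat and conj = conj and neg = neg,
            OF sat_conj sat_neg \<nu> bs])
    moreover have "?q -` {b} = {}" if "b \<notin> set bs" for b
      using bs(2) that by auto
    ultimately show ?thesis by (metis infsum_empty)
  qed
  moreover have "no_imp \<psi>" by (simp add: \<psi>_def cell_mass_assn_def no_imp_bigplus)
  ultimately show ?thesis using that by blast
qed

theorem lemmaD10:
  fixes sat :: "'s::countable \<Rightarrow> 'sa \<Rightarrow> bool"
    and conj :: "'sa \<Rightarrow> 'sa \<Rightarrow> 'sa"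
    and neg :: "'sa \<Rightarrow> 'sa"
    and \<mu> :: "'s \<Rightarrow> real"
    and As :: "('sa \<times> real) list"
  assumes sat_conj: "\<And>s A B. sat s (conj A B) \<longleftrightarrow> sat s A \<and> sat s B"
    and sat_neg: "\<And>s A. sat s (neg A) \<longleftrightarrow> \<not> sat s A"
    and mu: "is_subdist \<mu>"
    and probs: "\<forall>(A, p) \<in> set As. 0 \<le> p \<and> p \<le> 1"
  shows "\<not> osat sat \<mu> (bigplus As) \<longleftrightarrow>
         (\<exists>\<psi>. no_imp \<psi> \<and> osat sat \<mu> \<psi> \<and> oentails sat \<psi> (ONot (bigplus As)))"
proof
  let ?q = "truth_vector sat (map fst As)"
  assume \<mu>_unsat: "\<not> osat sat \<mu> (bigplus As)"
  obtain \<psi> where "no_imp \<psi>" and \<psi>: "\<And>\<nu>. is_subdist \<nu> \<Longrightarrow> osat sat \<nu> \<psi> \<longleftrightarrow>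
      (\<forall>b. infsum \<nu> (?q -` {b}) = infsum \<mu> (?q -` {b}))"
    using ex_no_imp_assn_same_cell_masses[where sat = sat and \<mu> = \<mu>, OF sat_conj sat_neg] by metis
  have As_on_cells: "sat s A \<longleftrightarrow> sat t A" if "A \<in> fst ` set As" "?q s = ?q t" for A s t
    using sat_eq_if_truth_vector_eq[of A "map fst As"] that by simp
  have "\<not> osat sat \<nu> (bigplus As)" if \<nu>: "is_subdist \<nu>" "osat sat \<nu> \<psi>" for \<nu>
    using osat_bigplus_transfer[where sat = sat and As = As,
        OF finite_range_truth_vector As_on_cells mu \<nu>(1)] \<psi>[OF \<nu>(1)] \<nu>(2) \<mu>_unsat
    by blast
  then have "oentails sat \<psi> (ONot (bigplus As))"
    by (simp add: oentails_def ONot_def)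
  then show "\<exists>\<psi>. no_imp \<psi> \<and> osat sat \<mu> \<psi> \<and> oentails sat \<psi> (ONot (bigplus As))"
    using \<open>no_imp \<psi>\<close> \<psi>[OF mu] by blast
next
  assume "\<exists>\<psi>. no_imp \<psi> \<and> osat sat \<mu> \<psi> \<and> oentails sat \<psi> (ONot (bigplus As))"
  then show "\<not> osat sat \<mu> (bigplus As)"
    using mu by (auto simp: oentails_def ONot_def)
qed

end
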